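(* Let $G$ be a connected graph on $n\ge 12$ vertices with $\gamma(G)\neq 2$. Then the parameters $dav(G,k_1,k_2,k_3)$ for all nonnegative integers $k_1,k_2,k_3$ with $0\le k_1+k_2+k_3\le n-3$, and $dav(G,k_1,k,k)$ for all nonnegative integers $k_1,k$ with $0\le k_1+2k\le n-3$, are reconstructible; that is, for every graph $H$ with $\mathscr{D}(H)=\mathscr{D}(G)$ these parameters take the same values on $H$ as on $G$.
   Context: All graphs are finite, simple and undirected; $\gamma(G)$ is the domination number. For a vertex $v$, the card $G-v$ is the unlabeled graph obtained by deleting $v$; the deck $\mathscr{D}(G)$ is the multiset of all cards. For nonnegative integers $k_1,k_2,k_3$, $dav(G,k_1,k_2,k_3)$ denotes the number of pairs of adjacent vertices $x$ and $y$ in $G$ such that exactly $k_1$ vertices are adjacent to both $x$ and $y$, exactly $k_2$ vertices other than $y$ are adjacent to $x$ but not to $y$, and exactly $k_3$ vertices other than $x$ are adjacent to $y$ but not to $x$. *)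

theory Defs
  imports Main
begin

definition simple_graph :: "'a set \<Rightarrow> ('a \<Rightarrow> 'a \<Rightarrow> bool) \<Rightarrow> bool" where
  "simple_graph V E \<longleftrightarrow> finite V \<and> (\<forall>x y. E x y \<longrightarrow> x \<in> V \<and> y \<in> V)
     \<and> (\<forall>x y. E x y \<longrightarrow> E y x) \<and> (\<forall>x. \<not> E x x)"

definition connected_graph :: "'a set \<Rightarrow> ('a \<Rightarrow> 'a \<Rightarrow> bool) \<Rightarrow> bool" where
  "connected_graph V E \<longleftrightarrow> (\<forall>x\<in>V. \<forall>y\<in>V. E\<^sup>*\<^sup>* x y)"

definition dominating_set :: "'a set \<Rightarrow> ('a \<Rightarrow> 'a \<Rightarrow> bool) \<Rightarrow> 'a set \<Rightarrow> bool" where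
  "dominating_set V E D \<longleftrightarrow> D \<subseteq> V \<and> (\<forall>v\<in>V. v \<in> D \<or> (\<exists>u\<in>D. E v u))"

definition domination_number :: "'a set \<Rightarrow> ('a \<Rightarrow> 'a \<Rightarrow> bool) \<Rightarrow> nat" where
  "domination_number V E = (LEAST k. \<exists>D. dominating_set V E D \<and> card D = k)"

definition graph_iso :: "'a set \<Rightarrow> ('a \<Rightarrow> 'a \<Rightarrow> bool) \<Rightarrow> 'b set \<Rightarrow> ('b \<Rightarrow> 'b \<Rightarrow> bool) \<Rightarrow> bool" where
  "graph_iso V E V' E' \<longleftrightarrow> (\<exists>f. bij_betw f V V' \<and> (\<forall>x\<in>V. \<forall>y\<in>V. E x y \<longleftrightarrow> E' (f x) (f y)))"

definition del_edges :: "('a \<Rightarrow> 'a \<Rightarrow> bool) \<Rightarrow> 'a \<Rightarrow> 'a \<Rightarrow> 'a \<Rightarrow> bool" where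
  "del_edges E v = (\<lambda>x y. E x y \<and> x \<noteq> v \<and> y \<noteq> v)"

text \<open>Equal decks: the multisets of (unlabeled) cards coincide, i.e. there is a
bijection of vertices matching each card of G with an isomorphic card of H.\<close>
definition same_deck :: "'a set \<Rightarrow> ('a \<Rightarrow> 'a \<Rightarrow> bool) \<Rightarrow> 'b set \<Rightarrow> ('b \<Rightarrow> 'b \<Rightarrow> bool) \<Rightarrow> bool" where
  "same_deck V E V' E' \<longleftrightarrow> (\<exists>f. bij_betw f V V' \<and>
     (\<forall>v\<in>V. graph_iso (V - {v}) (del_edges E v) (V' - {f v}) (del_edges E' (f v))))"

definition dav :: "'a set \<Rightarrow> ('a \<Rightarrow> 'a \<Rightarrow> bool) \<Rightarrow> nat \<Rightarrow> nat \<Rightarrow> nat \<Rightarrow> nat" where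
  "dav V E k1 k2 k3 = card {(x, y). x \<in> V \<and> y \<in> V \<and> E x y
      \<and> card {z \<in> V. E x z \<and> E y z} = k1
      \<and> card {z \<in> V. z \<noteq> y \<and> E x z \<and> \<not> E y z} = k2
      \<and> card {z \<in> V. z \<noteq> x \<and> E y z \<and> \<not> E x z} = k3}"

end

theory Submission
  imports Defs
begin

text \<open>
  Call (k1, k2, k3) the profile of the arc (x, y), and s = k1 + k2 + k3, the number of vertices
  outside {x, y} adjacent to x or y, its size. Deleting a vertex w outside {x, y} keeps the arc
  and changes its profile only if w is one of these s neighbours, in which case exactly one entry
  drops by one. Counting arcs over the deck (Kelly's lemma) therefore determines
    (n - 2 - s) dav(k1, k2, k3) + (k1 + 1) dav(k1 + 1, k2, k3)
      + (k2 + 1) dav(k1, k2 + 1, k3) + (k3 + 1) dav(k1, k2, k3 + 1),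
  so the values with s \<le> n - 3 follow by downward induction on s once the arcs of size n - 2,
  the dominating arcs, are known to be absent from both G and H.

  If G has a dominating vertex u, the edge count shows that the vertex of H matched with u
  dominates H as well, and then H is isomorphic to G. Otherwise \<gamma>(G) \<noteq> 2 rules out dominating
  arcs in G and connectedness rules out arcs of size 0. Summing over the profiles of size s, the
  deck determines (n - 2 - s) M(s) + (s + 1) M(s + 1) for the number M(s) of arcs of size s, so
  M_H(s) - M_G(s) = (-1)^s (n - 2 choose s) M_H(0); in particular M_H(n - 2) = \<plusminus>M_H(0). Since no
  graph on at least three vertices has both an isolated and a dominating arc, M_H(n - 2) = 0.
\<close>

lemma card_Diff_pair:
  assumes "finite V" "x \<in> V" "y \<in> V" "x \<noteq> y"
  shows "card (V - {x, y}) = card V - 2"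
  using assms by (simp add: card_Diff_subset)

lemma card_ge_3_Diff_pairE:
  assumes "finite V" "card V \<ge> 3"
  obtains z where "z \<in> V - {x, y}"
proof -
  have "card V - card {x, y} \<le> card (V - {x, y})"
    by (rule diff_card_le_card_Diff) simp
  moreover have "card {x, y} \<le> 2"
    by (simp add: card_insert_le_m1)
  ultimately have "card (V - {x, y}) \<noteq> 0"
    using assms(2) by linarith
  then show ?thesis
    using that by (metis all_not_in_conv card.empty)
qed

lemma card_Un3_disjoint:
  assumes "finite A" "finite B" "finite C" "A \<inter> B = {}" "A \<inter> C = {}" "B \<inter> C = {}"
  shows "card (A \<union> B \<union> C) = card A + card B + card C"
  using assms by (simp add: card_Un_disjoint Int_Un_distrib2)

lemma card_filter_const:
  assumes "\<And>w. w \<in> A \<Longrightarrow> Q w \<longleftrightarrow> c"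
  shows "card {w \<in> A. Q w} = (if c then card A else 0)"
proof -
  have "{w \<in> A. Q w} = (if c then A else {})"
    using assms by auto
  then show ?thesis by simp
qed

lemma sum_if_const:
  assumes "finite A"
  shows "(\<Sum>a\<in>A. if Q a then c else 0) = c * card {a \<in> A. Q a}"
  using assms by (simp add: sum.inter_filter[symmetric])

lemma card_filter_by_removed_sizes:
  assumes "finite U" "A \<subseteq> U" "B \<subseteq> U" "C \<subseteq> U" "A \<inter> B = {}" "A \<inter> C = {}" "B \<inter> C = {}"
  shows "card {w \<in> U. P (card (A - {w}), card (B - {w}), card (C - {w}))} =
    (if P (card A, card B, card C) then card U - card A - card B - card C else 0) +
    (if P (card A - 1, card B, card C) then card A else 0) +
    (if P (card A, card B - 1, card C) then card B else 0) +
    (if P (card A, card B, card C - 1) then card C else 0)"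
proof -
  define Q where "Q w \<longleftrightarrow> P (card (A - {w}), card (B - {w}), card (C - {w}))" for w
  define R where "R = U - (A \<union> B \<union> C)"
  have fin: "finite A" "finite B" "finite C" "finite R"
    using assms finite_subset unfolding R_def by auto
  have disj: "\<And>w. w \<in> A \<Longrightarrow> w \<notin> B \<and> w \<notin> C" "\<And>w. w \<in> B \<Longrightarrow> w \<notin> A \<and> w \<notin> C"
    "\<And>w. w \<in> C \<Longrightarrow> w \<notin> A \<and> w \<notin> B"
    using assms by blast+
  have "{w \<in> U. Q w} = ({w \<in> A. Q w} \<union> {w \<in> B. Q w} \<union> {w \<in> C. Q w}) \<union> {w \<in> R. Q w}"
    using assms unfolding R_def by blast
  moreover have "card ({w \<in> A. Q w} \<union> {w \<in> B. Q w} \<union> {w \<in> C. Q w}) =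
      card {w \<in> A. Q w} + card {w \<in> B. Q w} + card {w \<in> C. Q w}"
    by (rule card_Un3_disjoint) (use fin assms in auto)
  moreover have "({w \<in> A. Q w} \<union> {w \<in> B. Q w} \<union> {w \<in> C. Q w}) \<inter> {w \<in> R. Q w} = {}"
    unfolding R_def by blast
  ultimately have "card {w \<in> U. Q w} =
      card {w \<in> A. Q w} + card {w \<in> B. Q w} + card {w \<in> C. Q w} + card {w \<in> R. Q w}"
    using fin by (simp add: card_Un_disjoint)
  moreover have "card {w \<in> A. Q w} = (if P (card A - 1, card B, card C) then card A else 0)"
    by (rule card_filter_const) (use fin in \<open>auto simp: Q_def dest: disj\<close>)
  moreover have "card {w \<in> B. Q w} = (if P (card A, card B - 1, card C) then card B else 0)"
    by (rule card_filter_const) (use fin in \<open>auto simp: Q_def dest: disj\<close>)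
  moreover have "card {w \<in> C. Q w} = (if P (card A, card B, card C - 1) then card C else 0)"
    by (rule card_filter_const) (use fin in \<open>auto simp: Q_def dest: disj\<close>)
  moreover have "card {w \<in> R. Q w} = (if P (card A, card B, card C) then card R else 0)"
    by (rule card_filter_const) (auto simp: Q_def R_def)
  moreover have "card R = card U - card A - card B - card C"
    using assms fin card_Un3_disjoint[of A B C] unfolding R_def by (simp add: card_Diff_subset)
  ultimately show ?thesis by (simp add: Q_def)
qed

lemma alternating_binomial_recurrence:
  fixes d :: "nat \<Rightarrow> int"
  assumes "\<And>s. int (Suc s) * d (Suc s) = - int (m - s) * d s"
  shows "d s = (-1) ^ s * int (m choose s) * d 0"
proof (induction s)
  case (Suc s)
  have "int (Suc s) * d (Suc s) = (-1) ^ Suc s * int ((m - s) * (m choose s)) * d 0"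
    using assms[of s] Suc by simp
  also have "(m - s) * (m choose s) = Suc s * (m choose Suc s)"
    by (simp only: binomial_absorb_comp binomial_absorption)
  finally have "int (Suc s) * d (Suc s) = int (Suc s) * ((-1) ^ Suc s * int (m choose Suc s) * d 0)"
    by (simp add: algebra_simps)
  then show ?case
    by (metis mult_cancel_left of_nat_eq_0_iff nat.distinct(1))
qed simp

lemma simple_graphD:
  assumes "simple_graph V E"
  shows "finite V" and "E x y \<Longrightarrow> x \<in> V" and "E x y \<Longrightarrow> y \<in> V"
    and "E x y \<Longrightarrow> E y x" and "\<not> E x x"
  using assms unfolding simple_graph_def by blast+

lemma domination_number_le:
  assumes "dominating_set V E D"
  shows "domination_number V E \<le> card D"
  unfolding domination_number_def by (rule Least_le) (use assms in blast)

lemma domination_numberE: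
  obtains D where "dominating_set V E D" "card D = domination_number V E"
proof -
  have V: "dominating_set V E V"
    unfolding dominating_set_def by blast
  have "\<exists>D. dominating_set V E D \<and> card D = domination_number V E"
    unfolding domination_number_def
    by (rule LeastI_ex[where P = "\<lambda>k. \<exists>D. dominating_set V E D \<and> card D = k"]) (use V in blast)
  then show ?thesis
    using that by blast
qed

lemma same_deck_card:
  assumes "same_deck V E W F"
  shows "card W = card V"
  using assms unfolding same_deck_def by (metis bij_betw_same_card)

section \<open>Arc profiles\<close>

definition arcs :: "'a set \<Rightarrow> ('a \<Rightarrow> 'a \<Rightarrow> bool) \<Rightarrow> ('a \<times> 'a) set" where
  "arcs V E = {e \<in> V \<times> V. case_prod E e}"

definition arc_profile :: "'a set \<Rightarrow> ('a \<Rightarrow> 'a \<Rightarrow> bool) \<Rightarrow> 'a \<times> 'a \<Rightarrow> nat \<times> nat \<times> nat" where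
  "arc_profile V E = (\<lambda>(x, y).
     (card {z \<in> V. E x z \<and> E y z}, card {z \<in> V. z \<noteq> y \<and> E x z \<and> \<not> E y z},
      card {z \<in> V. z \<noteq> x \<and> E y z \<and> \<not> E x z}))"

definition count_arcs :: "'a set \<Rightarrow> ('a \<Rightarrow> 'a \<Rightarrow> bool) \<Rightarrow> (nat \<times> nat \<times> nat \<Rightarrow> bool) \<Rightarrow> nat" where
  "count_arcs V E P = card {e \<in> arcs V E. P (arc_profile V E e)}"

definition count_arcs_size :: "'a set \<Rightarrow> ('a \<Rightarrow> 'a \<Rightarrow> bool) \<Rightarrow> nat \<Rightarrow> nat" where
  "count_arcs_size V E s = count_arcs V E (\<lambda>(a, b, c). a + b + c = s)"

lemma finite_arcs: "finite V \<Longrightarrow> finite (arcs V E)"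
  unfolding arcs_def by (auto intro: finite_subset)

lemma dav_eq_count_arcs: "dav V E k1 k2 k3 = count_arcs V E (\<lambda>p. p = (k1, k2, k3))"
  unfolding dav_def count_arcs_def arcs_def arc_profile_def
  by (rule arg_cong[where f = card]) auto

lemma dav_le_count_arcs_size:
  assumes "finite V"
  shows "dav V E k1 k2 k3 \<le> count_arcs_size V E (k1 + k2 + k3)"
  unfolding dav_eq_count_arcs count_arcs_size_def count_arcs_def
  by (rule card_mono) (auto intro: finite_subset finite_arcs[OF assms])

lemma arc_profile_size:
  assumes "simple_graph V E" "E x y" "arc_profile V E (x, y) = (a, b, c)"
  shows "a + b + c = card {z \<in> V - {x, y}. E x z \<or> E y z}"
proof -
  have "{z \<in> V - {x, y}. E x z \<or> E y z} =
      {z \<in> V. E x z \<and> E y z} \<union> {z \<in> V. z \<noteq> y \<and> E x z \<and> \<not> E y z}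
        \<union> {z \<in> V. z \<noteq> x \<and> E y z \<and> \<not> E x z}"
    using simple_graphD(5)[OF assms(1)] by auto
  moreover have "finite V"
    using assms(1) by (rule simple_graphD)
  ultimately show ?thesis
    using assms(3) unfolding arc_profile_def by (simp add: card_Un3_disjoint disjoint_iff)
qed

lemma arc_profile_size_le:
  assumes "simple_graph V E" "E x y" "arc_profile V E (x, y) = (a, b, c)"
  shows "a + b + c \<le> card V - 2"
proof -
  have "card {z \<in> V - {x, y}. E x z \<or> E y z} \<le> card (V - {x, y})"
    using simple_graphD(1)[OF assms(1)] by (intro card_mono) auto
  also have "\<dots> = card V - 2"
    using assms simple_graphD[OF assms(1)] by (intro card_Diff_pair) auto
  finally show ?thesis
    using arc_profile_size[OF assms] by simp
qed

lemma arc_profile_iso: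
  assumes g: "bij_betw g V V'"
    and hom: "\<And>x y. x \<in> V \<Longrightarrow> y \<in> V \<Longrightarrow> E' (g x) (g y) \<longleftrightarrow> E x y"
    and "x \<in> V" "y \<in> V"
  shows "arc_profile V' E' (g x, g y) = arc_profile V E (x, y)"
proof -
  have card_eq: "card {z \<in> V'. Q z} = card {z \<in> V. Q (g z)}" for Q
    using bij_betw_same_card[OF bij_betw_Collect[where Q = Q, OF g refl]] by simp
  have inj: "g z = g w \<longleftrightarrow> z = w" if "z \<in> V" "w \<in> V" for z w
    using g that unfolding bij_betw_def inj_on_def by blast
  show ?thesis
    unfolding arc_profile_def using assms(3,4)
    by (simp add: card_eq hom inj cong: conj_cong)
qed

lemma count_arcs_iso:
  assumes "graph_iso V E V' E'"
  shows "count_arcs V' E' P = count_arcs V E P"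
proof -
  obtain g where g: "bij_betw g V V'" and hom: "\<forall>x\<in>V. \<forall>y\<in>V. E x y \<longleftrightarrow> E' (g x) (g y)"
    using assms unfolding graph_iso_def by blast
  have hom': "E' (g x) (g y) \<longleftrightarrow> E x y" if "x \<in> V" "y \<in> V" for x y
    using hom that by blast
  have "bij_betw (map_prod g g) (arcs V E) (arcs V' E')"
    unfolding arcs_def by (rule bij_betw_Collect[OF bij_betw_map_prod[OF g g]]) (auto simp: hom')
  then have "bij_betw (map_prod g g)
      {e \<in> arcs V E. P (arc_profile V E e)} {e \<in> arcs V' E'. P (arc_profile V' E' e)}"
    by (rule bij_betw_Collect) (auto simp: arcs_def arc_profile_iso[OF g, where E' = E' and E = E, OF hom'])
  then show ?thesis
    unfolding count_arcs_def by (simp add: bij_betw_same_card)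
qed

section \<open>Counting arcs over the deck\<close>

text \<open>The number of cards G - w of an n-vertex graph G in which an arc of profile (a, b, c)
  survives with a profile satisfying P: the n - 2 - a - b - c vertices w outside the neighbourhood
  of the arc leave the profile unchanged, and each of the a (b, c) vertices of the first (second,
  third) class lowers that entry by one (when an entry is 0, the truncated subtraction is
  harmless because its weight is 0).\<close>

definition deletion_weight :: "nat \<Rightarrow> (nat \<times> nat \<times> nat \<Rightarrow> bool) \<Rightarrow> nat \<times> nat \<times> nat \<Rightarrow> nat" where
  "deletion_weight n P = (\<lambda>(a, b, c).
     (if P (a, b, c) then n - 2 - a - b - c else 0) +
     (if P (a - 1, b, c) then a else 0) +
     (if P (a, b - 1, c) then b else 0) +
     (if P (a, b, c - 1) then c else 0))"

lemma card_deletions_keeping_arc: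
  assumes "simple_graph V E" "E x y"
  shows "card {w \<in> V. (x, y) \<in> arcs (V - {w}) (del_edges E w)
                 \<and> P (arc_profile (V - {w}) (del_edges E w) (x, y))}
         = deletion_weight (card V) P (arc_profile V E (x, y))"
proof -
  have fin: "finite V" and xy: "x \<in> V" "y \<in> V" "x \<noteq> y"
    using simple_graphD[OF assms(1)] assms(2) by metis+
  define A where "A = {z \<in> V. E x z \<and> E y z}"
  define B where "B = {z \<in> V. z \<noteq> y \<and> E x z \<and> \<not> E y z}"
  define C where "C = {z \<in> V. z \<noteq> x \<and> E y z \<and> \<not> E x z}"
  have "arc_profile (V - {w}) (del_edges E w) (x, y) = (card (A - {w}), card (B - {w}), card (C - {w}))"
    if "w \<noteq> x" "w \<noteq> y" for w
  proof -
    have "{z \<in> V - {w}. del_edges E w x z \<and> del_edges E w y z} = A - {w}"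
      "{z \<in> V - {w}. z \<noteq> y \<and> del_edges E w x z \<and> \<not> del_edges E w y z} = B - {w}"
      "{z \<in> V - {w}. z \<noteq> x \<and> del_edges E w y z \<and> \<not> del_edges E w x z} = C - {w}"
      unfolding A_def B_def C_def del_edges_def using that by auto
    then show ?thesis
      unfolding arc_profile_def by simp
  qed
  then have "{w \<in> V. (x, y) \<in> arcs (V - {w}) (del_edges E w)
                 \<and> P (arc_profile (V - {w}) (del_edges E w) (x, y))}
      = {w \<in> V - {x, y}. P (card (A - {w}), card (B - {w}), card (C - {w}))}"
    using assms(2) xy unfolding arcs_def del_edges_def by auto
  moreover have "card {w \<in> V - {x, y}. P (card (A - {w}), card (B - {w}), card (C - {w}))} =
    (if P (card A, card B, card C) then card (V - {x, y}) - card A - card B - card C else 0) +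
    (if P (card A - 1, card B, card C) then card A else 0) +
    (if P (card A, card B - 1, card C) then card B else 0) +
    (if P (card A, card B, card C - 1) then card C else 0)"
    by (rule card_filter_by_removed_sizes)
      (use fin simple_graphD(5)[OF assms(1)] in \<open>auto simp: A_def B_def C_def\<close>)
  moreover have "card (V - {x, y}) = card V - 2"
    using fin xy by (rule card_Diff_pair)
  ultimately show ?thesis
    unfolding deletion_weight_def arc_profile_def A_def B_def C_def by simp
qed

definition deck_count :: "'a set \<Rightarrow> ('a \<Rightarrow> 'a \<Rightarrow> bool) \<Rightarrow> (nat \<times> nat \<times> nat \<Rightarrow> bool) \<Rightarrow> nat" where
  "deck_count V E P = (\<Sum>w\<in>V. count_arcs (V - {w}) (del_edges E w) P)"

lemma deck_count_eq_sum_deletion_weight: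
  assumes "simple_graph V E"
  shows "deck_count V E P = (\<Sum>e\<in>arcs V E. deletion_weight (card V) P (arc_profile V E e))"
proof -
  let ?keeps = "\<lambda>w e. e \<in> arcs (V - {w}) (del_edges E w)
                      \<and> P (arc_profile (V - {w}) (del_edges E w) e)"
  have fin: "finite V"
    using assms by (rule simple_graphD)
  have "arcs (V - {w}) (del_edges E w) \<subseteq> arcs V E" for w
    unfolding arcs_def del_edges_def by auto
  then have "count_arcs (V - {w}) (del_edges E w) P = card {e \<in> arcs V E. ?keeps w e}" for w
    unfolding count_arcs_def by (metis (no_types, lifting) subsetD)
  then have "deck_count V E P = (\<Sum>w\<in>V. card {e \<in> arcs V E. ?keeps w e})"
    unfolding deck_count_def by simp
  also have "\<dots> = (\<Sum>e\<in>arcs V E. deletion_weight (card V) P (arc_profile V E e))"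
  proof (rule sum_multicount_gen[OF fin finite_arcs[OF fin]], intro ballI)
    fix e assume "e \<in> arcs V E"
    then obtain x y where "e = (x, y)" "E x y"
      unfolding arcs_def by blast
    then show "card {w \<in> V. ?keeps w e} = deletion_weight (card V) P (arc_profile V E e)"
      using card_deletions_keeping_arc[OF assms] by simp
  qed
  finally show ?thesis .
qed

lemma deck_count_same_deck:
  assumes "same_deck V E W F"
  shows "deck_count W F P = deck_count V E P"
proof -
  obtain f where f: "bij_betw f V W"
    and iso: "\<forall>v\<in>V. graph_iso (V - {v}) (del_edges E v) (W - {f v}) (del_edges F (f v))"
    using assms unfolding same_deck_def by blast
  have "deck_count W F P = (\<Sum>v\<in>V. count_arcs (W - {f v}) (del_edges F (f v)) P)"
    unfolding deck_count_def
    using sum.reindex_bij_betw[OF f, of "\<lambda>w. count_arcs (W - {w}) (del_edges F w) P"] by simp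
  also have "\<dots> = deck_count V E P"
    unfolding deck_count_def by (intro sum.cong refl count_arcs_iso iso[rule_format])
  finally show ?thesis .
qed

lemma deletion_weight_eq:
  "deletion_weight n (\<lambda>p. p = (k1, k2, k3)) p =
    (if p = (k1, k2, k3) then n - 2 - (k1 + k2 + k3) else 0) +
    (if p = (Suc k1, k2, k3) then Suc k1 else 0) +
    (if p = (k1, Suc k2, k3) then Suc k2 else 0) +
    (if p = (k1, k2, Suc k3) then Suc k3 else 0)"
proof -
  obtain a b c where p: "p = (a, b, c)"
    by (cases p)
  show ?thesis
    unfolding p deletion_weight_def by (cases a; cases b; cases c) auto
qed

lemma deletion_weight_size:
  "deletion_weight n (\<lambda>(a, b, c). a + b + c = s) p =
    (if (case p of (a, b, c) \<Rightarrow> a + b + c = s) then n - 2 - s else 0) +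
    (if (case p of (a, b, c) \<Rightarrow> a + b + c = Suc s) then Suc s else 0)"
proof -
  obtain a b c where p: "p = (a, b, c)"
    by (cases p)
  show ?thesis
    unfolding p deletion_weight_def by (cases a; cases b; cases c) auto
qed

lemma deck_count_dav:
  assumes "simple_graph V E"
  shows "deck_count V E (\<lambda>p. p = (k1, k2, k3)) =
     (card V - 2 - (k1 + k2 + k3)) * dav V E k1 k2 k3 + Suc k1 * dav V E (Suc k1) k2 k3
     + Suc k2 * dav V E k1 (Suc k2) k3 + Suc k3 * dav V E k1 k2 (Suc k3)"
  using finite_arcs[OF simple_graphD(1)[OF assms]]
  unfolding deck_count_eq_sum_deletion_weight[OF assms] deletion_weight_eq
  by (simp add: sum.distrib sum_if_const dav_eq_count_arcs count_arcs_def)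

lemma deck_count_size:
  assumes "simple_graph V E"
  shows "deck_count V E (\<lambda>(a, b, c). a + b + c = s) =
     (card V - 2 - s) * count_arcs_size V E s + Suc s * count_arcs_size V E (Suc s)"
  using finite_arcs[OF simple_graphD(1)[OF assms]]
  unfolding deck_count_eq_sum_deletion_weight[OF assms] deletion_weight_size
  by (simp add: sum.distrib sum_if_const count_arcs_size_def count_arcs_def)

lemma deck_count_all:
  assumes "simple_graph V E"
  shows "deck_count V E (\<lambda>_. True) = (card V - 2) * card (arcs V E)"
proof -
  have "deletion_weight (card V) (\<lambda>_. True) (arc_profile V E e) = card V - 2"
    if e: "e \<in> arcs V E" for e
  proof -
    obtain x y where xy: "e = (x, y)" "E x y"
      using e unfolding arcs_def by auto
    obtain a b c where abc: "arc_profile V E (x, y) = (a, b, c)"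
      by (cases "arc_profile V E (x, y)")
    show ?thesis
      using arc_profile_size_le[OF assms xy(2) abc] abc unfolding xy(1) by (simp add: deletion_weight_def)
  qed
  then show ?thesis
    unfolding deck_count_eq_sum_deletion_weight[OF assms] by simp
qed

section \<open>Isolated and dominating arcs\<close>

lemma count_arcs_size_nonzeroE:
  assumes "simple_graph V E" "count_arcs_size V E s \<noteq> 0"
  obtains x y where "E x y" "card {z \<in> V - {x, y}. E x z \<or> E y z} = s"
proof -
  obtain e where e: "e \<in> arcs V E" "case arc_profile V E e of (a, b, c) \<Rightarrow> a + b + c = s"
    using assms(2) unfolding count_arcs_size_def count_arcs_def
    by (metis (mono_tags, lifting) card.empty empty_Collect_eq)
  obtain x y where xy: "e = (x, y)"
    by (cases e)
  obtain a b c where abc: "arc_profile V E (x, y) = (a, b, c)"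
    by (cases "arc_profile V E (x, y)")
  have "E x y"
    using e(1) unfolding xy arcs_def by simp
  moreover have "a + b + c = s"
    using e(2) abc unfolding xy by simp
  ultimately show ?thesis
    using that arc_profile_size[OF assms(1) _ abc] by simp
qed

lemma isolated_arcE:
  assumes "simple_graph V E" "count_arcs_size V E 0 \<noteq> 0"
  obtains x y where "E x y" "\<And>u v. E u v \<Longrightarrow> u \<in> {x, y} \<Longrightarrow> v \<in> {x, y}"
proof -
  obtain x y where xy: "E x y" and size: "card {z \<in> V - {x, y}. E x z \<or> E y z} = 0"
    using count_arcs_size_nonzeroE[OF assms] .
  have "v \<in> {x, y}" if "E u v" "u \<in> {x, y}" for u v
  proof (rule ccontr)
    assume "v \<notin> {x, y}"
    then have "v \<in> {z \<in> V - {x, y}. E x z \<or> E y z}"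
      using that simple_graphD(3)[OF assms(1)] by auto
    then show False
      using size simple_graphD(1)[OF assms(1)] by auto
  qed
  then show ?thesis
    using that xy by blast
qed

lemma dominating_arcE:
  assumes "simple_graph V E" "count_arcs_size V E (card V - 2) \<noteq> 0"
  obtains x y where "E x y" "\<And>z. z \<in> V - {x, y} \<Longrightarrow> E x z \<or> E y z"
proof -
  obtain x y where xy: "E x y" and size: "card {z \<in> V - {x, y}. E x z \<or> E y z} = card V - 2"
    using count_arcs_size_nonzeroE[OF assms] .
  have fin: "finite V"
    using assms(1) by (rule simple_graphD)
  have "card (V - {x, y}) = card V - 2"
    using fin simple_graphD[OF assms(1)] xy by (intro card_Diff_pair) metis+
  then have "{z \<in> V - {x, y}. E x z \<or> E y z} = V - {x, y}"
    using fin size by (intro card_subset_eq) auto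
  then show ?thesis
    using that xy by blast
qed

lemma count_arcs_size_0_connected:
  assumes "simple_graph V E" "connected_graph V E" "card V \<ge> 3"
  shows "count_arcs_size V E 0 = 0"
proof (rule ccontr)
  assume "count_arcs_size V E 0 \<noteq> 0"
  then obtain x y where xy: "E x y"
    and closed: "\<And>u v. E u v \<Longrightarrow> u \<in> {x, y} \<Longrightarrow> v \<in> {x, y}"
    using isolated_arcE[OF assms(1)] by blast
  obtain z where z: "z \<in> V - {x, y}"
    using card_ge_3_Diff_pairE[OF simple_graphD(1)[OF assms(1)] assms(3)] .
  have "E\<^sup>*\<^sup>* x z"
    using assms(2) z simple_graphD(2)[OF assms(1) xy] unfolding connected_graph_def by blast
  then have "z \<in> {x, y}"
  proof (induction rule: rtranclp_induct)
    case (step v w)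
    then show ?case
      using closed by blast
  qed simp
  with z show False
    by blast
qed

lemma isolated_and_dominating_arc_exclusive:
  assumes "simple_graph V E" "card V \<ge> 3"
  shows "count_arcs_size V E 0 = 0 \<or> count_arcs_size V E (card V - 2) = 0"
proof (rule ccontr)
  assume "\<not> ?thesis"
  then obtain a b x y where ab: "E a b"
    and closed: "\<And>u v. E u v \<Longrightarrow> u \<in> {a, b} \<Longrightarrow> v \<in> {a, b}"
    and xy: "E x y" and dominating: "\<And>z. z \<in> V - {x, y} \<Longrightarrow> E x z \<or> E y z"
    using isolated_arcE[OF assms(1)] dominating_arcE[OF assms(1)] by metis
  note E = simple_graphD[OF assms(1)]
  have "x \<in> {a, b} \<or> y \<in> {a, b}"
  proof (rule ccontr)
    assume outside: "\<not> (x \<in> {a, b} \<or> y \<in> {a, b})"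
    then have "E x a \<or> E y a"
      using dominating E(2)[OF ab] by auto
    then show False
      using outside closed E(4) by blast
  qed
  then have inside: "x \<in> {a, b}" "y \<in> {a, b}"
    using closed xy E(4)[OF xy] by blast+
  obtain z where z: "z \<in> V - {a, b}"
    using card_ge_3_Diff_pairE[OF E(1) assms(2)] .
  then have "E x z \<or> E y z"
    using dominating inside by auto
  then show False
    using closed inside z by blast
qed

lemma dominating_vertex_if_domination_number_lt_2:
  assumes "simple_graph V E" "V \<noteq> {}" "domination_number V E < 2"
  shows "\<exists>u\<in>V. \<forall>v\<in>V - {u}. E u v"
proof -
  note E = simple_graphD[OF assms(1)]
  obtain D where D: "dominating_set V E D" "card D = domination_number V E"
    by (rule domination_numberE)
  have "finite D"
    using D(1) E(1) finite_subset unfolding dominating_set_def by blast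
  moreover have "D \<noteq> {}"
    using D(1) assms(2) unfolding dominating_set_def by blast
  ultimately have "card D \<noteq> 0"
    by simp
  then have "card D = 1"
    using D(2) assms(3) by linarith
  then obtain u where "D = {u}"
    by (rule card_1_singletonE)
  then have u: "u \<in> V" "\<And>v. v \<in> V - {u} \<Longrightarrow> E v u"
    using D(1) unfolding dominating_set_def by auto
  show ?thesis
  proof (intro bexI ballI)
    fix v assume "v \<in> V - {u}"
    then show "E u v"
      by (rule E(4)[OF u(2)])
  qed (rule u(1))
qed

lemma dominating_vertex_if_count_arcs_size_top:
  assumes "simple_graph V E" "domination_number V E \<noteq> 2" "count_arcs_size V E (card V - 2) \<noteq> 0"
  shows "\<exists>u\<in>V. \<forall>v\<in>V - {u}. E u v"
proof -
  note E = simple_graphD[OF assms(1)]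
  obtain x y where xy: "E x y" and dominating: "\<And>z. z \<in> V - {x, y} \<Longrightarrow> E x z \<or> E y z"
    using dominating_arcE[OF assms(1,3)] by blast
  have "dominating_set V E {x, y}"
    unfolding dominating_set_def
  proof (intro conjI ballI)
    show "{x, y} \<subseteq> V"
      using E(2,3)[OF xy] by blast
    fix v assume "v \<in> V"
    then show "v \<in> {x, y} \<or> (\<exists>u\<in>{x, y}. E v u)"
      using dominating[of v] E(4)[of x v] E(4)[of y v] by blast
  qed
  moreover have "x \<noteq> y"
    using xy E(5) by metis
  ultimately have "domination_number V E \<le> 2"
    using domination_number_le by fastforce
  with assms(2) have "domination_number V E < 2"
    by simp
  moreover have "V \<noteq> {}"
    using E(2)[OF xy] by blast
  ultimately show ?thesis
    using dominating_vertex_if_domination_number_lt_2[OF assms(1)] by blast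
qed

lemma card_arcs_same_deck:
  assumes "simple_graph V E" "simple_graph W F" "same_deck V E W F" "card V \<ge> 3"
  shows "card (arcs W F) = card (arcs V E)"
proof -
  have "(card V - 2) * card (arcs W F) = (card V - 2) * card (arcs V E)"
    using deck_count_same_deck[OF assms(3), of "\<lambda>_. True"]
    unfolding deck_count_all[OF assms(1)] deck_count_all[OF assms(2)] same_deck_card[OF assms(3)] .
  then show ?thesis
    using assms(4) by simp
qed

lemma card_arcs_delete_vertex:
  assumes "simple_graph V E" "w \<in> V"
  shows "card (arcs V E) = card (arcs (V - {w}) (del_edges E w)) + 2 * card {v \<in> V. E w v}"
proof -
  define N where "N = {v \<in> V. E w v}"
  note E = simple_graphD[OF assms(1)]
  have "arcs V E = arcs (V - {w}) (del_edges E w) \<union> Pair w ` N \<union> (\<lambda>v. (v, w)) ` N"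
    unfolding arcs_def del_edges_def N_def using assms(2) E(4) by auto
  moreover have "finite N"
    using E(1) unfolding N_def by simp
  moreover have "w \<notin> N"
    using E(5) unfolding N_def by blast
  ultimately have "card (arcs V E) =
      card (arcs (V - {w}) (del_edges E w)) + card (Pair w ` N) + card ((\<lambda>v. (v, w)) ` N)"
    using finite_arcs[OF finite_Diff[OF E(1)]]
    by (simp only:) (rule card_Un3_disjoint; auto simp: arcs_def del_edges_def)
  moreover have "card (Pair w ` N) = card N" "card ((\<lambda>v. (v, w)) ` N) = card N"
    by (simp_all add: card_image inj_on_def)
  ultimately show ?thesis
    unfolding N_def[symmetric] by simp
qed

lemma graph_iso_insert_dominating_vertex:
  assumes "simple_graph V E" "simple_graph W F"
    and "u \<in> V" "\<forall>v\<in>V - {u}. E u v" and "u' \<in> W" "\<forall>v\<in>W - {u'}. F u' v"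
    and "graph_iso (V - {u}) (del_edges E u) (W - {u'}) (del_edges F u')"
  shows "graph_iso V E W F"
proof -
  obtain g where g: "bij_betw g (V - {u}) (W - {u'})"
    and hom: "\<forall>x\<in>V - {u}. \<forall>y\<in>V - {u}. del_edges E u x y \<longleftrightarrow> del_edges F u' (g x) (g y)"
    using assms(7) unfolding graph_iso_def by blast
  define h where "h = g(u := u')"
  have g_into: "g x \<in> W - {u'}" if "x \<in> V - {u}" for x
    using g that by (rule bij_betw_apply)
  have "bij_betw h (V - {u}) (W - {u'})"
    using g by (subst bij_betw_cong[where g = g]) (auto simp: h_def)
  then have "bij_betw h (V - {u} \<union> {u}) (W - {u'} \<union> {h u})"
    by (subst notIn_Un_bij_betw3[symmetric]) (auto simp: h_def)
  then have "bij_betw h V W"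
    using assms(3,5) by (simp add: h_def insert_absorb)
  moreover have "E x y \<longleftrightarrow> F (h x) (h y)" if xy: "x \<in> V" "y \<in> V" for x y
  proof -
    note EV = simple_graphD[OF assms(1)] and FW = simple_graphD[OF assms(2)]
    consider "x = u" "y = u" | "x = u" "y \<noteq> u" | "x \<noteq> u" "y = u" | "x \<noteq> u" "y \<noteq> u"
      by blast
    then show ?thesis
    proof cases
      case 1
      then show ?thesis
        using EV(5) FW(5) by (simp add: h_def)
    next
      case 2
      then show ?thesis
        using xy assms(4,6) g_into[of y] by (simp add: h_def)
    next
      case 3
      then show ?thesis
        using xy assms(4,6) g_into[of x] EV(4)[of u x] FW(4)[of u' "g x"] by (auto simp: h_def)
    next
      case 4
      then have "del_edges E u x y \<longleftrightarrow> del_edges F u' (g x) (g y)"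
        using hom xy by blast
      then show ?thesis
        using 4 xy g_into[of x] g_into[of y] by (simp add: h_def del_edges_def)
    qed
  qed
  ultimately show ?thesis
    unfolding graph_iso_def by blast
qed

lemma same_deck_dominating_vertex_iso:
  assumes "simple_graph V E" "simple_graph W F" "same_deck V E W F" "card V \<ge> 3"
    and "u \<in> V" "\<forall>v\<in>V - {u}. E u v"
  shows "graph_iso V E W F"
proof -
  obtain f where f: "bij_betw f V W"
    and iso: "\<forall>v\<in>V. graph_iso (V - {v}) (del_edges E v) (W - {f v}) (del_edges F (f v))"
    using assms(3) unfolding same_deck_def by blast
  note EV = simple_graphD[OF assms(1)] and FW = simple_graphD[OF assms(2)]
  have fu: "f u \<in> W"
    using f assms(5) by (rule bij_betw_apply)
  have card_arcs_card: "card (arcs (W - {f u}) (del_edges F (f u))) = card (arcs (V - {u}) (del_edges E u))"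
    using count_arcs_iso[OF iso[rule_format, OF assms(5)], of "\<lambda>_. True"] unfolding count_arcs_def by simp
  have "{v \<in> V. E u v} = V - {u}"
    using assms(6) EV(5) by auto
  then have "card {v \<in> V. E u v} = card V - 1"
    using EV(1) assms(5) by simp
  then have "card {v \<in> W. F (f u) v} = card (W - {f u})"
    using card_arcs_delete_vertex[OF assms(1,5)] card_arcs_delete_vertex[OF assms(2) fu] card_arcs_card
      card_arcs_same_deck[OF assms(1-4)] same_deck_card[OF assms(3)] fu FW(1) by simp
  then have "{v \<in> W. F (f u) v} = W - {f u}"
    using FW(1,5) by (intro card_subset_eq) auto
  then have "\<forall>v\<in>W - {f u}. F (f u) v"
    by blast
  then show ?thesis
    using graph_iso_insert_dominating_vertex[OF assms(1,2,5,6) fu] iso assms(5) by blast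
qed

lemma same_deck_count_arcs_size_top:
  assumes "simple_graph V E" "simple_graph W F" "same_deck V E W F" "card V \<ge> 3"
    and "count_arcs_size V E 0 = 0" "count_arcs_size V E (card V - 2) = 0"
  shows "count_arcs_size W F (card V - 2) = 0"
proof -
  define d where "d s = int (count_arcs_size W F s) - int (count_arcs_size V E s)" for s
  have rec: "int (Suc s) * d (Suc s) = - int (card V - 2 - s) * d s" for s
  proof -
    have "(card V - 2 - s) * count_arcs_size W F s + Suc s * count_arcs_size W F (Suc s)
        = (card V - 2 - s) * count_arcs_size V E s + Suc s * count_arcs_size V E (Suc s)"
      using deck_count_same_deck[OF assms(3), of "\<lambda>(a, b, c). a + b + c = s"]
      unfolding deck_count_size[OF assms(1)] deck_count_size[OF assms(2)] same_deck_card[OF assms(3)] .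
    then have "int ((card V - 2 - s) * count_arcs_size W F s + Suc s * count_arcs_size W F (Suc s))
        = int ((card V - 2 - s) * count_arcs_size V E s + Suc s * count_arcs_size V E (Suc s))"
      by (rule arg_cong)
    then show ?thesis
      unfolding d_def of_nat_add of_nat_mult by (simp add: algebra_simps)
  qed
  have "d (card V - 2) = (-1) ^ (card V - 2) * d 0"
    using alternating_binomial_recurrence[of d "card V - 2", OF rec, of "card V - 2"] by simp
  then have "int (count_arcs_size W F (card V - 2)) = (-1) ^ (card V - 2) * int (count_arcs_size W F 0)"
    unfolding d_def using assms(5,6) by simp
  moreover have "count_arcs_size W F 0 = 0 \<or> count_arcs_size W F (card V - 2) = 0"
    using isolated_and_dominating_arc_exclusive[OF assms(2)] assms(4) same_deck_card[OF assms(3)] by simp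
  ultimately show ?thesis
    by auto
qed

lemma dav_same_deck_downward:
  assumes "simple_graph V E" "simple_graph W F" "same_deck V E W F"
    and "count_arcs_size V E (card V - 2) = 0" "count_arcs_size W F (card V - 2) = 0"
    and "k1 + k2 + k3 + t = card V - 2"
  shows "dav W F k1 k2 k3 = dav V E k1 k2 k3"
  using assms(6)
proof (induction t arbitrary: k1 k2 k3)
  case 0
  then have "dav V E k1 k2 k3 = 0" "dav W F k1 k2 k3 = 0"
    using dav_le_count_arcs_size[OF simple_graphD(1)[OF assms(1)], of E k1 k2 k3]
      dav_le_count_arcs_size[OF simple_graphD(1)[OF assms(2)], of F k1 k2 k3] assms(4,5)
      same_deck_card[OF assms(3)] by simp_all
  then show ?case
    by simp
next
  case (Suc t)
  have higher: "dav W F (Suc k1) k2 k3 = dav V E (Suc k1) k2 k3"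
    "dav W F k1 (Suc k2) k3 = dav V E k1 (Suc k2) k3"
    "dav W F k1 k2 (Suc k3) = dav V E k1 k2 (Suc k3)"
    using Suc by simp_all
  have "card V - 2 - (k1 + k2 + k3) = Suc t"
    using Suc.prems by simp
  then have "Suc t * dav W F k1 k2 k3 = Suc t * dav V E k1 k2 k3"
    using deck_count_same_deck[OF assms(3), of "\<lambda>p. p = (k1, k2, k3)"]
    unfolding deck_count_dav[OF assms(1)] deck_count_dav[OF assms(2)] same_deck_card[OF assms(3)] higher
    by simp
  then show ?case
    by (metis mult_cancel1 Zero_not_Suc)
qed

theorem theorem18:
  fixes V :: "'a set" and E :: "'a \<Rightarrow> 'a \<Rightarrow> bool"
    and W :: "'b set" and F :: "'b \<Rightarrow> 'b \<Rightarrow> bool"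
  assumes "simple_graph V E" and "connected_graph V E" and "card V \<ge> 12"
    and "domination_number V E \<noteq> 2"
    and "simple_graph W F" and "same_deck V E W F"
  shows "(\<forall>k1 k2 k3. k1 + k2 + k3 \<le> card V - 3 \<longrightarrow> dav W F k1 k2 k3 = dav V E k1 k2 k3)
       \<and> (\<forall>k1 k. k1 + 2 * k \<le> card V - 3 \<longrightarrow> dav W F k1 k k = dav V E k1 k k)"
proof -
  have n: "card V \<ge> 3"
    using assms(3) by simp
  have "dav W F k1 k2 k3 = dav V E k1 k2 k3" if "k1 + k2 + k3 \<le> card V - 3" for k1 k2 k3
  proof (cases "\<exists>u\<in>V. \<forall>v\<in>V - {u}. E u v")
    case True
    then have "graph_iso V E W F"
      using same_deck_dominating_vertex_iso[OF assms(1,5,6) n] by blast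
    then show ?thesis
      by (simp add: dav_eq_count_arcs count_arcs_iso)
  next
    case False
    then have top: "count_arcs_size V E (card V - 2) = 0"
      using dominating_vertex_if_count_arcs_size_top[OF assms(1,4)] by blast
    moreover have "count_arcs_size V E 0 = 0"
      using count_arcs_size_0_connected[OF assms(1,2) n] .
    ultimately have "count_arcs_size W F (card V - 2) = 0"
      using same_deck_count_arcs_size_top[OF assms(1,5,6) n] by blast
    then show ?thesis
      using dav_same_deck_downward[OF assms(1,5,6) top, of k1 k2 k3 "card V - 2 - (k1 + k2 + k3)"] that
      by simp
  qed
  then show ?thesis
    by (simp add: mult_2)
qed

end
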